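(* Let $T:\mathbb{R}_+^N\to\mathbb{R}_{++}^N$ be a standard interference mapping, let $\|\cdot\|_a$ be a monotone norm on $\mathbb{R}^N$, and for each $\bar p>0$ let $(\mathbf{p}_{\bar p},c_{\bar p})$ be the unique solution of the problem described in the context, with $\lambda_{\bar p}:=1/c_{\bar p}$. Let $T_\infty$ be the asymptotic mapping of $T$. Then: (i) The limit $\lambda_\infty:=\lim_{\bar p\to\infty}\lambda_{\bar p}\ge 0$ exists. (ii) Assume in addition that $T$ is continuous. Let $(\bar p_n)_{n\in\mathbb{N}}\subset\mathbb{R}_{++}$ be any monotonically increasing sequence with $\bar p_n\to\infty$, and set $\mathbf{x}_n:=\mathbf{p}_{\bar p_n}/\|\mathbf{p}_{\bar p_n}\|_a$. If $\mathbf{x}_\infty\in\mathbb{R}_+^N$ is an accumulation point of the bounded sequence $(\mathbf{x}_n)_{n\in\mathbb{N}}$, then $(\mathbf{x}_\infty,\lambda_\infty)$ solves the problem: find $(\mathbf{x},\lambda)\in\mathbb{R}_+^N\times\mathbb{R}_+$ with $T_\infty(\mathbf{x})=\lambda\mathbf{x}$ and $\|\mathbf{x}\|_a=1$. (iii) Under the assumptions and notation of (ii), if the problem "find $(\mathbf{x},\lambda)\in\mathbb{R}_+^N\times\mathbb{R}_+$ with $T_\infty(\mathbf{x})=\lambda\mathbf{x}$ and $\|\mathbf{x}\|_a=1$" has a unique solution $(\mathbf{x}',\lambda')$, and it lies in $\mathbb{R}_{++}^N\times\mathbb{R}_{++}$, then $\lim_{n\to\infty}\mathbf{x}_n=\mathbf{x}'$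 (so $\mathbf{x}_\infty=\mathbf{x}'$) and $\lambda'=\lambda_\infty$.
   Context: Vector inequalities are coordinatewise; $\mathbb{R}_+$, $\mathbb{R}_{++}$ denote nonnegative and positive reals. A norm $\|\cdot\|$ on $\mathbb{R}^N$ is monotone if $\mathbf{0}\le\mathbf{x}\le\mathbf{y}$ implies $\|\mathbf{x}\|\le\|\mathbf{y}\|$. A function $f:\mathbb{R}^N\to\mathbb{R}_{++}\cup\{\infty\}$ is a standard interference function if: (1) for all $\mathbf{x}\in\mathbb{R}_+^N$ and all $\alpha>1$, $\alpha f(\mathbf{x})>f(\alpha\mathbf{x})$; (2) for all $\mathbf{x}_1,\mathbf{x}_2\in\mathbb{R}_+^N$, $\mathbf{x}_1\ge\mathbf{x}_2$ implies $f(\mathbf{x}_1)\ge f(\mathbf{x}_2)$; (3) $f(\mathbf{x})=\infty$ iff $\mathbf{x}\notin\mathbb{R}_+^N$. A standard interference mapping is $T:\mathbb{R}_+^N\to\mathbb{R}_{++}^N$, $T(\mathbf{x})=(t_1(\mathbf{x}),\dots,t_N(\mathbf{x}))$, with each $t_i$ a standard interference function. For a proper function $f:\mathbb{R}^N\to\mathbb{R}\cup\{\infty\}$, its asymptotic function is $f_\infty(\mathbf{x})=\inf\{\liminf_{n\to\infty} f(h_n\mathbf{x}_n)/h_n : h_n\to\infty,\ \mathbf{x}_n\to\mathbf{x}\}$. The asymptotic mapping of $T$ is $T_\infty(\mathbf{x})=((t_1)_\infty(\mathbf{x}),\dots,(t_N)_\infty(\mathbf{x}))$ on $\mathbb{R}_+^N$.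 For a power budget $\bar p>0$, consider the problem: maximize $c$ over $(\mathbf{p},c)\in\mathbb{R}_+^N\times\mathbb{R}_{++}$ subject to $\mathbf{p}=cT(\mathbf{p})$ and $\|\mathbf{p}\|_a\le\bar p$. It is known that this problem has a unique solution $(\mathbf{p}_{\bar p},c_{\bar p})\in\mathbb{R}_{++}^N\times\mathbb{R}_{++}$, that it satisfies $T(\mathbf{p}_{\bar p})=(1/c_{\bar p})\mathbf{p}_{\bar p}$ and $\|\mathbf{p}_{\bar p}\|_a=\bar p$, and that $\bar p\mapsto c_{\bar p}$ is strictly increasing. *)

theory Defs
  imports "HOL-Analysis.Analysis"
begin

definition nonneg :: "(real ^ 'n) set" where
  "nonneg = {x. \<forall>i. 0 \<le> x $ i}"

definition posv :: "(real ^ 'n) set" where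
  "posv = {x. \<forall>i. 0 < x $ i}"

definition is_norm :: "(real ^ 'n \<Rightarrow> real) \<Rightarrow> bool" where
  "is_norm na \<longleftrightarrow>
     (\<forall>x. 0 \<le> na x) \<and> (\<forall>x. na x = 0 \<longleftrightarrow> x = 0) \<and>
     (\<forall>c x. na (c *\<^sub>R x) = \<bar>c\<bar> * na x) \<and>
     (\<forall>x y. na (x + y) \<le> na x + na y)"

definition monotone_norm :: "(real ^ 'n \<Rightarrow> real) \<Rightarrow> bool" where
  "monotone_norm na \<longleftrightarrow> is_norm na \<and>
     (\<forall>x y. (\<forall>i. 0 \<le> x $ i \<and> x $ i \<le> y $ i) \<longrightarrow> na x \<le> na y)"

text \<open>A standard interference function, given by its (positive real) values on the
  nonnegative orthant; outside the orthant it takes the value infinity (see ext_fun).\<close>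
definition standard_interference_fun :: "(real ^ 'n \<Rightarrow> real) \<Rightarrow> bool" where
  "standard_interference_fun f \<longleftrightarrow>
     (\<forall>x\<in>nonneg. 0 < f x) \<and>
     (\<forall>x\<in>nonneg. \<forall>\<alpha>>1. f (\<alpha> *\<^sub>R x) < \<alpha> * f x) \<and>
     (\<forall>x1\<in>nonneg. \<forall>x2\<in>nonneg. (\<forall>i. x2 $ i \<le> x1 $ i) \<longrightarrow> f x2 \<le> f x1)"

definition standard_interference_map :: "(real ^ 'n \<Rightarrow> real ^ 'n) \<Rightarrow> bool" where
  "standard_interference_map T \<longleftrightarrow> (\<forall>i. standard_interference_fun (\<lambda>x. T x $ i))"

definition ext_fun :: "(real ^ 'n \<Rightarrow> real) \<Rightarrow> real ^ 'n \<Rightarrow> ereal" where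
  "ext_fun f x = (if x \<in> nonneg then ereal (f x) else \<infinity>)"

definition asymptotic_fun :: "(real ^ 'n \<Rightarrow> real) \<Rightarrow> real ^ 'n \<Rightarrow> ereal" where
  "asymptotic_fun f x = Inf {liminf (\<lambda>n. ext_fun f (h n *\<^sub>R y n) / ereal (h n)) | h y.
       filterlim h at_top sequentially \<and> y \<longlonglongrightarrow> x}"

definition asymptotic_map :: "(real ^ 'n \<Rightarrow> real ^ 'n) \<Rightarrow> real ^ 'n \<Rightarrow> 'n \<Rightarrow> ereal" where
  "asymptotic_map T x i = asymptotic_fun (\<lambda>y. T y $ i) x"

text \<open>Feasible points of: maximize c s.t. p = c T(p), ||p||_a \<le> pbar.\<close>
definition feasible :: "(real ^ 'n \<Rightarrow> real ^ 'n) \<Rightarrow> (real ^ 'n \<Rightarrow> real) \<Rightarrow> real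
    \<Rightarrow> real ^ 'n \<Rightarrow> real \<Rightarrow> bool" where
  "feasible T na pbar p c \<longleftrightarrow> p \<in> nonneg \<and> 0 < c \<and> p = c *\<^sub>R T p \<and> na p \<le> pbar"

definition is_solution :: "(real ^ 'n \<Rightarrow> real ^ 'n) \<Rightarrow> (real ^ 'n \<Rightarrow> real) \<Rightarrow> real
    \<Rightarrow> real ^ 'n \<Rightarrow> real \<Rightarrow> bool" where
  "is_solution T na pbar p c \<longleftrightarrow> feasible T na pbar p c \<and>
     (\<forall>p' c'. feasible T na pbar p' c' \<longrightarrow> c' \<le> c)"

definition asym_eig :: "(real ^ 'n \<Rightarrow> real ^ 'n) \<Rightarrow> (real ^ 'n \<Rightarrow> real)
    \<Rightarrow> real ^ 'n \<Rightarrow> real \<Rightarrow> bool" where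
  "asym_eig T na x l \<longleftrightarrow> x \<in> nonneg \<and> 0 \<le> l \<and>
     (\<forall>i. asymptotic_map T x i = ereal (l * x $ i)) \<and> na x = 1"

end

theory Submission
  imports Defs
begin

text \<open>The optimal value \<open>C\<^sub>p\<close> grows with the budget \<open>p\<close> because the feasible set grows, so
  \<open>\<lambda>\<^sub>p = 1 / C\<^sub>p\<close> decreases to its infimum \<open>\<lambda>\<^sub>\<infinity>\<close>. For continuous \<open>T\<close>, Brouwer's theorem shows
  that an optimal power vector exhausts the budget, so \<open>P\<^sub>p = p x\<^sub>p\<close> with \<open>\<parallel>x\<^sub>p\<parallel> = 1\<close> and
  \<open>T(p x\<^sub>p) = \<lambda>\<^sub>p p x\<^sub>p\<close>. Since \<open>h \<mapsto> t(h x)/h\<close> is nonincreasing for a standard interference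
  function, \<open>h \<lambda>\<^sub>p x\<^sub>p \<le> T(h x\<^sub>p)\<close> whenever \<open>h \<le> p\<close>; passing to the limit along a subsequence
  \<open>x\<^sub>p \<rightarrow> x\<^sub>\<infinity>\<close> gives \<open>h \<lambda>\<^sub>\<infinity> x\<^sub>\<infinity> \<le> T(h x\<^sub>\<infinity>)\<close> for all \<open>h > 0\<close>, the lower bound for \<open>T\<^sub>\<infinity>(x\<^sub>\<infinity>)\<close>,
  while the sequence \<open>p x\<^sub>p\<close> itself attains \<open>\<lambda>\<^sub>\<infinity> x\<^sub>\<infinity>\<close>, the upper bound. The normalized vectors
  lie in a compact box, so if the asymptotic eigenproblem has a unique solution, every
  subsequential limit equals it and the whole sequence converges.\<close>

lemma antimono_tendsto_at_top_Inf:
  fixes f :: "real \<Rightarrow> real"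
  assumes anti: "\<And>p q. 0 < p \<Longrightarrow> p \<le> q \<Longrightarrow> f q \<le> f p"
    and bdd: "\<And>p. 0 < p \<Longrightarrow> 0 \<le> f p"
  shows "(f \<longlongrightarrow> (INF p\<in>{0<..}. f p)) at_top"
proof (rule decreasing_tendsto)
  have "bdd_below (f ` {0<..})"
    using bdd by (auto simp: bdd_below_def)
  then have "(INF p\<in>{0<..}. f p) \<le> f p" if "0 < p" for p
    using that by (auto intro: cInf_lower)
  then show "eventually (\<lambda>p. (INF p\<in>{0<..}. f p) \<le> f p) at_top"
    by (auto simp: eventually_at_top_linorder intro!: exI[of _ 1])
next
  fix a assume "(INF p\<in>{0<..}. f p) < a"
  then obtain p where p: "0 < p" "f p < a"
    using cInf_lessD[of "f ` {0<..}" a] by auto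
  then show "eventually (\<lambda>q. f q < a) at_top"
    using anti[OF p(1)] by (auto simp: eventually_at_top_linorder intro!: exI[of _ p]
        intro: le_less_trans)
qed

lemma compact_subseq_limits_imp_tendsto:
  fixes x :: "nat \<Rightarrow> 'a::metric_space"
  assumes K: "\<And>n. x n \<in> K" "compact K"
    and limits: "\<And>r l. strict_mono r \<Longrightarrow> (x \<circ> r) \<longlonglongrightarrow> l \<Longrightarrow> l = a"
  shows "x \<longlonglongrightarrow> a"
proof (rule ccontr)
  assume "\<not> x \<longlonglongrightarrow> a"
  then obtain e where e: "0 < e" "frequently (\<lambda>n. e \<le> dist (x n) a) sequentially"
    unfolding tendsto_iff by (auto simp: not_eventually not_less)
  then have "infinite {n. e \<le> dist (x n) a}"
    by (simp add: frequently_cofinite[symmetric] cofinite_eq_sequentially)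
  then obtain s :: "nat \<Rightarrow> nat" where s: "strict_mono s" "\<And>n. e \<le> dist (x (s n)) a"
    using infinite_enumerate by blast
  obtain l t where lt: "strict_mono t" "(x \<circ> s \<circ> t) \<longlonglongrightarrow> l"
    using seq_compactE[OF compact_imp_seq_compact[OF K(2)], of "x \<circ> s"] K(1) by (metis comp_apply)
  have "l = a"
    using limits[of "s \<circ> t" l] lt s(1) strict_mono_o by (metis comp_assoc)
  then have "eventually (\<lambda>n. dist (x (s (t n))) a < e) sequentially"
    using lt(2) e(1) unfolding tendsto_iff by simp
  then obtain n where "dist (x (s (t n))) a < e"
    by (auto simp: eventually_sequentially)
  then show False
    using s(2)[of "t n"] by simp
qed

section \<open>Standard interference functions\<close>

lemma nonneg_scaleR: "x \<in> nonneg \<Longrightarrow> 0 \<le> a \<Longrightarrow> a *\<^sub>R x \<in> nonneg"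
  by (simp add: nonneg_def)

lemma eventually_scaled_le:
  fixes y :: "nat \<Rightarrow> real ^ 'n"
  assumes y: "y \<longlonglongrightarrow> x" and x: "x \<in> nonneg" and "d < 1"
  shows "eventually (\<lambda>n. y n \<in> nonneg \<longrightarrow> (\<forall>j. d * x $ j \<le> y n $ j)) sequentially"
proof -
  have "eventually (\<lambda>n. y n \<in> nonneg \<longrightarrow> d * x $ j \<le> y n $ j) sequentially" for j
  proof (cases "x $ j = 0")
    case False
    then have "d * x $ j < x $ j"
      using x \<open>d < 1\<close> by (simp add: nonneg_def less_le)
    then have "eventually (\<lambda>n. d * x $ j < y n $ j) sequentially"
      by (rule order_tendstoD(1)[OF tendsto_vec_nth[OF y]])
    then show ?thesis
      by (rule eventually_mono) simp
  qed (simp add: nonneg_def)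
  then have "eventually (\<lambda>n. \<forall>j. y n \<in> nonneg \<longrightarrow> d * x $ j \<le> y n $ j) sequentially"
    by (rule eventually_all_finite)
  then show ?thesis
    by (rule eventually_mono) blast
qed

context
  fixes f :: "real ^ 'n \<Rightarrow> real"
  assumes f: "standard_interference_fun f"
begin

lemma interference_fun_pos: "x \<in> nonneg \<Longrightarrow> 0 < f x"
  using f by (simp add: standard_interference_fun_def)

lemma interference_fun_mono:
  "x \<in> nonneg \<Longrightarrow> y \<in> nonneg \<Longrightarrow> (\<And>i. x $ i \<le> y $ i) \<Longrightarrow> f x \<le> f y"
  using f by (simp add: standard_interference_fun_def)

lemma interference_fun_scaleR_less: "x \<in> nonneg \<Longrightarrow> 1 < a \<Longrightarrow> f (a *\<^sub>R x) < a * f x"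
  using f by (simp add: standard_interference_fun_def)

lemma interference_fun_scaleR_le: "x \<in> nonneg \<Longrightarrow> 1 \<le> a \<Longrightarrow> f (a *\<^sub>R x) \<le> a * f x"
  using interference_fun_scaleR_less[of x a] by (cases "a = 1") auto

lemma interference_fun_quotient_antimono:
  assumes x: "x \<in> nonneg" and "0 < h" "h \<le> k"
  shows "f (k *\<^sub>R x) / k \<le> f (h *\<^sub>R x) / h"
proof -
  have "f ((k / h) *\<^sub>R (h *\<^sub>R x)) \<le> (k / h) * f (h *\<^sub>R x)"
    using assms by (intro interference_fun_scaleR_le nonneg_scaleR) auto
  then show ?thesis
    using assms by (simp add: field_simps)
qed

lemma asymptotic_fun_ge:
  assumes x: "x \<in> nonneg" and lower: "\<And>h. 0 < h \<Longrightarrow> h * a \<le> f (h *\<^sub>R x)"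
  shows "ereal a \<le> asymptotic_fun f x"
  unfolding asymptotic_fun_def
proof (rule Inf_greatest, clarify)
  fix h :: "nat \<Rightarrow> real" and y
  assume h: "filterlim h at_top sequentially" and y: "y \<longlonglongrightarrow> x"
  let ?z = "liminf (\<lambda>n. ext_fun f (h n *\<^sub>R y n) / ereal (h n))"
  \<comment> \<open>Eventually \<open>y\<^sub>n \<ge> d x\<close>, so by monotonicity the quotients are at least \<open>d a\<close>; then let \<open>d \<rightarrow> 1\<close>.\<close>
  have scaled: "ereal (d * a) \<le> ?z" if d: "0 < d" "d < 1" for d
  proof -
    have "eventually (\<lambda>n. 0 < h n) sequentially"
      using h by (simp add: filterlim_at_top_dense)
    with eventually_scaled_le[OF y x d(2)]
    have "eventually (\<lambda>n. 0 < h n \<and> (y n \<in> nonneg \<longrightarrow> (\<forall>j. d * x $ j \<le> y n $ j)))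
        sequentially"
      by eventually_elim auto
    then show ?thesis
    proof (intro Liminf_bounded, elim eventually_mono, elim conjE)
      fix n assume hn: "0 < h n" and below: "y n \<in> nonneg \<longrightarrow> (\<forall>j. d * x $ j \<le> y n $ j)"
      show "ereal (d * a) \<le> ext_fun f (h n *\<^sub>R y n) / ereal (h n)"
      proof (cases "y n \<in> nonneg")
        case False
        then have "h n *\<^sub>R y n \<notin> nonneg"
          using hn nonneg_scaleR[of "h n *\<^sub>R y n" "1 / h n"] by auto
        then show ?thesis
          using hn by (simp add: ext_fun_def)
      next
        case True
        have "h n * d * a \<le> f ((h n * d) *\<^sub>R x)"
          using lower hn d by simp
        also have "\<dots> \<le> f (h n *\<^sub>R y n)"
          using True below hn d x by (intro interference_fun_mono nonneg_scaleR) auto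
        finally show ?thesis
          using True hn nonneg_scaleR[OF True] by (simp add: ext_fun_def field_simps)
      qed
    qed
  qed
  show "ereal a \<le> ?z"
  proof (rule ereal_le_mult_one_interval)
    show "?z \<noteq> -\<infinity>"
      using scaled[of "1 / 2"] by auto
    fix d :: ereal assume "0 < d" "d < 1"
    then show "d * ereal a \<le> ?z"
      using scaled by (cases d) auto
  qed
qed

end

lemma asymptotic_fun_le:
  assumes h: "filterlim h at_top sequentially" "\<And>n. 0 < h n"
    and y: "y \<longlonglongrightarrow> x" "\<And>n. y n \<in> nonneg"
    and lim: "((\<lambda>n. f (h n *\<^sub>R y n) / h n) \<longlongrightarrow> a) sequentially"
  shows "asymptotic_fun f x \<le> ereal a"
proof -
  have "ext_fun f (h n *\<^sub>R y n) / ereal (h n) = ereal (f (h n *\<^sub>R y n) / h n)" for n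
    using h(2)[of n] y(2)[of n] nonneg_scaleR[of "y n" "h n"] by (simp add: ext_fun_def)
  then have "liminf (\<lambda>n. ext_fun f (h n *\<^sub>R y n) / ereal (h n)) = ereal a"
    using lim by (simp add: lim_imp_Liminf)
  then show ?thesis
    unfolding asymptotic_fun_def using h(1) y(1) by (force intro: Inf_lower)
qed

section \<open>Monotone norms\<close>

context
  fixes na :: "real ^ 'n \<Rightarrow> real"
  assumes na: "monotone_norm na"
begin

lemma monotone_norm_scaleR: "na (c *\<^sub>R x) = \<bar>c\<bar> * na x"
  using na by (simp add: monotone_norm_def is_norm_def)

lemma monotone_norm_triangle: "na (x + y) \<le> na x + na y"
  using na by (simp add: monotone_norm_def is_norm_def)

lemma monotone_norm_pos: "x \<noteq> 0 \<Longrightarrow> 0 < na x"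
  using na unfolding monotone_norm_def is_norm_def by (metis less_eq_real_def)

lemma monotone_norm_mono: "(\<And>i. 0 \<le> x $ i \<and> x $ i \<le> y $ i) \<Longrightarrow> na x \<le> na y"
  using na by (simp add: monotone_norm_def)

lemma monotone_norm_nth_le: "x \<in> nonneg \<Longrightarrow> x $ i * na (axis i 1) \<le> na x"
  using monotone_norm_mono[of "x $ i *\<^sub>R axis i 1" x]
  by (auto simp: monotone_norm_scaleR nonneg_def axis_def)

lemma monotone_norm_le_sum: "na x \<le> (\<Sum>i\<in>UNIV. \<bar>x $ i\<bar> * na (axis i 1))"
proof -
  have "na (sum g A) \<le> (\<Sum>i\<in>A. na (g i))" if "finite A" for g and A :: "'n set"
    using that
  proof (induction A rule: finite_induct)
    case empty
    then show ?case using monotone_norm_scaleR[of 0 0] by simp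
  next
    case (insert a A)
    then show ?case using monotone_norm_triangle[of "g a" "sum g A"] by simp
  qed
  from this[of UNIV "\<lambda>i. x $ i *\<^sub>R axis i 1"] show ?thesis
    using basis_expansion[of x] by (simp add: scalar_mult_eq_scaleR monotone_norm_scaleR)
qed

lemma tendsto_monotone_norm:
  assumes f: "(f \<longlongrightarrow> l) F"
  shows "((\<lambda>n. na (f n)) \<longlongrightarrow> na l) F"
proof (rule LIM_zero_cancel, rule Lim_null_comparison)
  let ?g = "\<lambda>n. (\<Sum>i\<in>UNIV. \<bar>(f n - l) $ i\<bar> * na (axis i 1))"
  have "\<bar>na y - na z\<bar> \<le> na (y - z)" for y z
    using monotone_norm_triangle[of z "y - z"] monotone_norm_triangle[of y "z - y"]
      monotone_norm_scaleR[of "-1" "y - z"] by simp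
  then show "eventually (\<lambda>n. norm (na (f n) - na l) \<le> ?g n) F"
    by (intro always_eventually allI) (metis monotone_norm_le_sum order_trans real_norm_def)
  have "(?g \<longlongrightarrow> (\<Sum>i\<in>UNIV. \<bar>(l - l) $ i\<bar> * na (axis i 1))) F"
    by (intro tendsto_intros f)
  then show "(?g \<longlongrightarrow> 0) F"
    by simp
qed

lemma monotone_norm_unit_in_cbox:
  assumes "x \<in> nonneg" "na x = 1"
  shows "x \<in> cbox 0 (\<chi> i. 1 / na (axis i 1))"
proof -
  have "0 < na (axis i (1::real))" for i
    by (rule monotone_norm_pos) (simp add: axis_eq_0_iff)
  then show ?thesis
    using assms monotone_norm_nth_le[OF assms(1)]
    by (auto simp: mem_box_cart nonneg_def le_divide_eq)
qed

end

section \<open>Standard interference mappings\<close>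

lemma standard_interference_map_nth:
  "standard_interference_map T \<Longrightarrow> standard_interference_fun (\<lambda>x. T x $ i)"
  by (simp add: standard_interference_map_def)

lemma interference_map_uniform_contraction:
  assumes T: "standard_interference_map T" and x: "x \<in> nonneg" and \<beta>: "1 < \<beta>"
  obtains \<theta> where "0 < \<theta>" "\<theta> < 1" "\<And>i. T (\<beta> *\<^sub>R x) $ i \<le> \<theta> * (\<beta> * T x $ i)"
proof -
  note Tnth = standard_interference_map_nth[OF T]
  define ratio where "ratio i = T (\<beta> *\<^sub>R x) $ i / (\<beta> * T x $ i)" for i
  have Tx: "0 < T x $ i" for i
    using interference_fun_pos[OF Tnth x] .
  have ratio_pos: "0 < ratio i" for i
    using interference_fun_pos[OF Tnth nonneg_scaleR[OF x]] Tx \<beta> by (simp add: ratio_def)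
  have ratio_less: "ratio i < 1" for i
    using interference_fun_scaleR_less[OF Tnth x \<beta>] Tx \<beta> by (simp add: ratio_def)
  show ?thesis
  proof
    show "0 < Max (range ratio)"
      using ratio_pos by (auto simp: Max_gr_iff)
    show "Max (range ratio) < 1"
      using ratio_less by simp
    fix i
    have "T (\<beta> *\<^sub>R x) $ i = ratio i * (\<beta> * T x $ i)"
      using Tx[of i] \<beta> by (simp add: ratio_def)
    also have "\<dots> \<le> Max (range ratio) * (\<beta> * T x $ i)"
      using Tx[of i] \<beta> by (intro mult_right_mono) auto
    finally show "T (\<beta> *\<^sub>R x) $ i \<le> Max (range ratio) * (\<beta> * T x $ i)" .
  qed
qed

text \<open>With \<open>\<theta>\<close> from the uniform contraction, \<open>q \<mapsto> (c / \<theta>) T q\<close> maps the box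
  \<open>[p, \<beta> p]\<close> into itself by monotonicity of \<open>T\<close>, so Brouwer's theorem yields a fixed point
  with a strictly larger factor.\<close>
lemma interference_map_larger_fixed_point:
  assumes T: "standard_interference_map T" and cont: "continuous_on nonneg T"
    and p: "p \<in> nonneg" "0 < c" "p = c *\<^sub>R T p" and \<beta>: "1 < \<beta>"
  obtains c' q where "c < c'" "q = c' *\<^sub>R T q" "q \<in> cbox p (\<beta> *\<^sub>R p)"
proof -
  note Tnth = standard_interference_map_nth[OF T]
  obtain \<theta> where \<theta>: "0 < \<theta>" "\<theta> < 1" "\<And>i. T (\<beta> *\<^sub>R p) $ i \<le> \<theta> * (\<beta> * T p $ i)"
    using interference_map_uniform_contraction[OF T p(1) \<beta>] by blast
  define c' where "c' = c / \<theta>"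
  have "c < c'"
    using \<theta> p(2) by (simp add: c'_def field_simps)
  have pi: "p $ i = c * T p $ i" for i
    using arg_cong[OF p(3), of "\<lambda>v. v $ i"] by simp
  have box_nonneg: "cbox p (\<beta> *\<^sub>R p) \<subseteq> nonneg"
    using p(1) unfolding nonneg_def by (auto simp: mem_box_cart) (meson order_trans)
  have "p $ i \<le> \<beta> * p $ i" for i
    using mult_right_mono[of 1 \<beta> "p $ i"] p(1) \<beta> by (simp add: nonneg_def)
  then have "p \<in> cbox p (\<beta> *\<^sub>R p)"
    by (simp add: mem_box_cart)
  have maps_to: "c' *\<^sub>R T q \<in> cbox p (\<beta> *\<^sub>R p)" if q: "q \<in> cbox p (\<beta> *\<^sub>R p)" for q
  proof -
    have qn: "q \<in> nonneg"
      using q box_nonneg by auto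
    have "p $ i \<le> c' * T q $ i \<and> c' * T q $ i \<le> \<beta> * p $ i" for i
    proof
      have "T p $ i \<le> T q $ i"
        using q by (intro interference_fun_mono[OF Tnth p(1) qn]) (simp add: mem_box_cart)
      moreover have "c * T q $ i \<le> c' * T q $ i"
        using \<open>c < c'\<close> interference_fun_pos[OF Tnth qn] by simp
      ultimately show "p $ i \<le> c' * T q $ i"
        using pi[of i] mult_left_mono[of "T p $ i" "T q $ i" c] p(2) by linarith
      have "T q $ i \<le> T (\<beta> *\<^sub>R p) $ i"
        using q \<beta> p(1) by (intro interference_fun_mono[OF Tnth qn nonneg_scaleR])
          (auto simp: mem_box_cart)
      then have "c' * T q $ i \<le> c' * (\<theta> * (\<beta> * T p $ i))"
        using \<theta>(3)[of i] \<open>c < c'\<close> p(2) by (intro mult_left_mono) auto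
      also have "\<dots> = \<beta> * p $ i"
        using \<theta>(1) pi[of i] by (simp add: c'_def)
      finally show "c' * T q $ i \<le> \<beta> * p $ i" .
    qed
    then show ?thesis
      by (simp add: mem_box_cart)
  qed
  have "\<exists>q\<in>cbox p (\<beta> *\<^sub>R p). c' *\<^sub>R T q = q"
  proof (rule brouwer)
    show "continuous_on (cbox p (\<beta> *\<^sub>R p)) (\<lambda>q. c' *\<^sub>R T q)"
      by (intro continuous_intros continuous_on_subset[OF cont box_nonneg])
  qed (use \<open>p \<in> cbox p (\<beta> *\<^sub>R p)\<close> maps_to in auto)
  then show ?thesis
    using that \<open>c < c'\<close> by metis
qed

section \<open>The power control problem\<close>

locale power_control =
  fixes T :: "real ^ 'n \<Rightarrow> real ^ 'n" and na :: "real ^ 'n \<Rightarrow> real"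
    and P :: "real \<Rightarrow> real ^ 'n" and C :: "real \<Rightarrow> real"
  assumes T: "standard_interference_map T" and na: "monotone_norm na"
    and sol: "\<And>pbar. 0 < pbar \<Longrightarrow> is_solution T na pbar (P pbar) (C pbar)"
begin

lemma solution_feasible: "0 < p \<Longrightarrow> feasible T na p (P p) (C p)"
  using sol by (simp add: is_solution_def)

lemma solution_nonneg: "0 < p \<Longrightarrow> P p \<in> nonneg"
  and C_pos: "0 < p \<Longrightarrow> 0 < C p"
  and solution_fixed_point: "0 < p \<Longrightarrow> P p = C p *\<^sub>R T (P p)"
  and solution_budget: "0 < p \<Longrightarrow> na (P p) \<le> p"
  using solution_feasible by (auto simp: feasible_def)

lemma solution_fixed_point_nth: "0 < p \<Longrightarrow> P p $ i = C p * T (P p) $ i"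
  using arg_cong[OF solution_fixed_point, of p "\<lambda>v. v $ i"] by simp

lemma solution_ne_zero:
  assumes "0 < p"
  shows "P p \<noteq> 0"
proof
  assume "P p = 0"
  have "0 < C p * T (P p) $ i" for i
    using C_pos[OF assms] interference_fun_pos[OF standard_interference_map_nth[OF T]
        solution_nonneg[OF assms]] by simp
  then have "0 < P p $ i" for i
    using solution_fixed_point_nth[OF assms] by simp
  then show False
    using \<open>P p = 0\<close> by simp
qed

lemma C_mono:
  assumes "0 < p" "p \<le> q"
  shows "C p \<le> C q"
proof -
  have "feasible T na q (P p) (C p)"
    using solution_feasible[OF assms(1)] assms by (auto simp: feasible_def)
  then show ?thesis
    using sol[of q] assms by (simp add: is_solution_def)
qed

definition lambda_inf :: real where
  "lambda_inf = (INF p\<in>{0<..}. 1 / C p)"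

lemma tendsto_lambda_inf: "((\<lambda>p. 1 / C p) \<longlongrightarrow> lambda_inf) at_top"
  unfolding lambda_inf_def
proof (rule antimono_tendsto_at_top_Inf)
  show "1 / C q \<le> 1 / C p" if "0 < p" "p \<le> q" for p q
    using C_mono[OF that] C_pos[of p] that by (intro divide_left_mono) auto
  show "0 \<le> 1 / C p" if "0 < p" for p
    using C_pos[OF that] by simp
qed

lemma lambda_inf_le: "0 < p \<Longrightarrow> lambda_inf \<le> 1 / C p"
  unfolding lambda_inf_def
proof (rule cINF_lower)
  show "bdd_below ((\<lambda>p. 1 / C p) ` {0<..})"
    using C_pos by (intro bdd_belowI[of _ 0]) (auto intro: less_imp_le)
qed simp

lemma lambda_inf_nonneg: "0 \<le> lambda_inf"
  unfolding lambda_inf_def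
  by (rule cINF_greatest) (use C_pos in \<open>auto simp: less_imp_le\<close>)

definition normalized :: "real \<Rightarrow> real ^ 'n" where
  "normalized p = (1 / na (P p)) *\<^sub>R P p"

lemma normalized_nonneg:
  assumes "0 < p"
  shows "normalized p \<in> nonneg"
  unfolding normalized_def using monotone_norm_pos[OF na solution_ne_zero[OF assms]]
  by (intro nonneg_scaleR solution_nonneg[OF assms]) simp

lemma normalized_unit:
  assumes "0 < p"
  shows "na (normalized p) = 1"
  using monotone_norm_pos[OF na solution_ne_zero[OF assms]]
  by (simp add: normalized_def monotone_norm_scaleR[OF na])

context
  assumes cont: "continuous_on nonneg T"
begin

lemma solution_budget_attained:
  assumes "0 < p"
  shows "na (P p) = p"
proof (rule ccontr)
  assume "na (P p) \<noteq> p"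
  then have less: "na (P p) < p"
    using solution_budget[OF assms] by simp
  have pos: "0 < na (P p)"
    using monotone_norm_pos[OF na solution_ne_zero[OF assms]] .
  define \<beta> where "\<beta> = p / na (P p)"
  have "1 < \<beta>"
    using pos less by (simp add: \<beta>_def)
  then obtain c' q where q: "C p < c'" "q = c' *\<^sub>R T q" "q \<in> cbox (P p) (\<beta> *\<^sub>R P p)"
    using interference_map_larger_fixed_point[OF T cont solution_nonneg[OF assms] C_pos[OF assms]
        solution_fixed_point[OF assms]] by blast
  have "q \<in> nonneg"
    using q(3) solution_nonneg[OF assms] unfolding nonneg_def
    by (auto simp: mem_box_cart) (meson order_trans)
  moreover have "na q \<le> na (\<beta> *\<^sub>R P p)"
    using q(3) \<open>q \<in> nonneg\<close> by (intro monotone_norm_mono[OF na]) (auto simp: mem_box_cart nonneg_def)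
  moreover have "na (\<beta> *\<^sub>R P p) = p"
    using pos \<open>1 < \<beta>\<close> by (simp add: monotone_norm_scaleR[OF na] \<beta>_def)
  ultimately have "feasible T na p q c'"
    using q C_pos[OF assms] by (auto simp: feasible_def)
  then have "c' \<le> C p"
    using sol[OF assms] unfolding is_solution_def by blast
  then show False
    using q(1) by simp
qed

lemma solution_eq_scaleR_normalized: "0 < p \<Longrightarrow> P p = p *\<^sub>R normalized p"
  by (simp add: normalized_def solution_budget_attained)

lemma T_normalized_quotient:
  assumes "0 < p"
  shows "T (p *\<^sub>R normalized p) $ i / p = 1 / C p * normalized p $ i"
proof -
  have "p * normalized p $ i = C p * T (p *\<^sub>R normalized p) $ i"
    using solution_fixed_point_nth[OF assms, of i]
    unfolding solution_eq_scaleR_normalized[OF assms] by simp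
  then show ?thesis
    using assms C_pos[OF assms] by (simp add: field_simps)
qed

lemma normalized_lower_bound:
  assumes "0 < h" "h \<le> p"
  shows "h * (1 / C p * normalized p $ i) \<le> T (h *\<^sub>R normalized p) $ i"
proof -
  have "0 < p"
    using assms by simp
  have "T (p *\<^sub>R normalized p) $ i / p \<le> T (h *\<^sub>R normalized p) $ i / h"
    using interference_fun_quotient_antimono[OF standard_interference_map_nth[OF T]
        normalized_nonneg[OF \<open>0 < p\<close>] assms] .
  then show ?thesis
    using T_normalized_quotient[OF \<open>0 < p\<close>, of i] assms by (simp add: field_simps)
qed

lemma accumulation_point_lower_bound:
  assumes q: "filterlim q at_top sequentially" "\<And>n. 0 < q n"
    and lim: "(\<lambda>n. normalized (q n)) \<longlonglongrightarrow> x" and x: "x \<in> nonneg" and h: "0 < h"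
  shows "h * (lambda_inf * x $ i) \<le> T (h *\<^sub>R x) $ i"
proof (rule tendsto_le[OF trivial_limit_sequentially])
  show "((\<lambda>n. T (h *\<^sub>R normalized (q n)) $ i) \<longlongrightarrow> T (h *\<^sub>R x) $ i) sequentially"
  proof (rule continuous_on_tendsto_compose[of nonneg "\<lambda>y. T y $ i"])
    show "continuous_on nonneg (\<lambda>y. T y $ i)"
      by (intro continuous_intros cont)
    show "((\<lambda>n. h *\<^sub>R normalized (q n)) \<longlongrightarrow> h *\<^sub>R x) sequentially"
      by (intro tendsto_intros lim)
    show "h *\<^sub>R x \<in> nonneg"
      using x h by (simp add: nonneg_scaleR)
    show "eventually (\<lambda>n. h *\<^sub>R normalized (q n) \<in> nonneg) sequentially"
      using normalized_nonneg[OF q(2)] h by (simp add: nonneg_scaleR)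
  qed
  show "((\<lambda>n. h * (lambda_inf * normalized (q n) $ i)) \<longlongrightarrow> h * (lambda_inf * x $ i)) sequentially"
    by (intro tendsto_intros lim)
  have "eventually (\<lambda>n. h \<le> q n) sequentially"
    using q(1) by (simp add: filterlim_at_top)
  then show "eventually (\<lambda>n. h * (lambda_inf * normalized (q n) $ i)
      \<le> T (h *\<^sub>R normalized (q n)) $ i) sequentially"
  proof (rule eventually_mono)
    fix n assume "h \<le> q n"
    have "lambda_inf * normalized (q n) $ i \<le> 1 / C (q n) * normalized (q n) $ i"
      using lambda_inf_le[OF q(2)] normalized_nonneg[OF q(2)]
      by (intro mult_right_mono) (auto simp: nonneg_def)
    then have "h * (lambda_inf * normalized (q n) $ i) \<le> h * (1 / C (q n) * normalized (q n) $ i)"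
      using h by (intro mult_left_mono) auto
    also have "\<dots> \<le> T (h *\<^sub>R normalized (q n)) $ i"
      using normalized_lower_bound[OF h \<open>h \<le> q n\<close>] .
    finally show "h * (lambda_inf * normalized (q n) $ i) \<le> T (h *\<^sub>R normalized (q n)) $ i" .
  qed
qed

lemma accumulation_point_asym_eig:
  assumes q: "filterlim q at_top sequentially" "\<And>n. 0 < q n"
    and lim: "(\<lambda>n. normalized (q n)) \<longlonglongrightarrow> x" and x: "x \<in> nonneg"
  shows "asym_eig T na x lambda_inf"
proof -
  have "na x = 1"
    using tendsto_monotone_norm[OF na lim] normalized_unit[OF q(2)] by (simp add: LIMSEQ_const_iff)
  moreover have "asymptotic_map T x i = ereal (lambda_inf * x $ i)" for i
    unfolding asymptotic_map_def
  proof (rule antisym)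
    have "((\<lambda>n. 1 / C (q n) * normalized (q n) $ i) \<longlongrightarrow> lambda_inf * x $ i) sequentially"
      by (intro tendsto_mult filterlim_compose[OF tendsto_lambda_inf q(1)] tendsto_vec_nth lim)
    then have "((\<lambda>n. T (q n *\<^sub>R normalized (q n)) $ i / q n) \<longlongrightarrow> lambda_inf * x $ i) sequentially"
      using T_normalized_quotient[OF q(2)] by simp
    then show "asymptotic_fun (\<lambda>y. T y $ i) x \<le> ereal (lambda_inf * x $ i)"
      by (rule asymptotic_fun_le[OF q lim normalized_nonneg[OF q(2)]])
    show "ereal (lambda_inf * x $ i) \<le> asymptotic_fun (\<lambda>y. T y $ i) x"
      using accumulation_point_lower_bound[OF q lim x]
      by (intro asymptotic_fun_ge[OF standard_interference_map_nth[OF T] x])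
  qed
  ultimately show ?thesis
    using x lambda_inf_nonneg by (simp add: asym_eig_def)
qed

lemma normalized_tendsto_unique_asym_eig:
  assumes q: "filterlim q at_top sequentially" "\<And>n. 0 < q n"
    and unique: "{(y, l). asym_eig T na y l} = {(x', l')}"
  shows "(\<lambda>n. normalized (q n)) \<longlonglongrightarrow> x' \<and> l' = lambda_inf"
proof -
  define K where "K = cbox (0 :: real ^ 'n) (\<chi> i. 1 / na (axis i 1))"
  have K: "normalized (q n) \<in> K" for n
    unfolding K_def
    using monotone_norm_unit_in_cbox[OF na normalized_nonneg normalized_unit] q(2) by blast
  have "compact K" "closed K"
    by (simp_all add: K_def closed_cbox)
  have limits: "l = x' \<and> lambda_inf = l'"
    if r: "strict_mono r" and lim: "((\<lambda>n. normalized (q n)) \<circ> r) \<longlonglongrightarrow> l" for r l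
  proof -
    have "l \<in> K"
      using Lim_in_closed_set[OF \<open>closed K\<close> _ _ lim] K by simp
    then have "l \<in> nonneg"
      by (auto simp: K_def mem_box_cart nonneg_def)
    then have "asym_eig T na l lambda_inf"
      using accumulation_point_asym_eig[of "q \<circ> r"] lim q(2)
        filterlim_compose[OF q(1) filterlim_subseq[OF r]] by (simp add: o_def)
    then have "(l, lambda_inf) \<in> {(y, l). asym_eig T na y l}"
      by simp
    then show ?thesis
      using unique by simp
  qed
  have "(\<lambda>n. normalized (q n)) \<longlonglongrightarrow> x'"
    using limits by (intro compact_subseq_limits_imp_tendsto[OF K \<open>compact K\<close>]) blast
  moreover have "l' = lambda_inf"
    using limits[OF strict_mono_id, of x'] calculation by simp
  ultimately show ?thesis ..
qed

end

end

theorem proposition2: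
  fixes T :: "real ^ 'n \<Rightarrow> real ^ 'n"
    and na :: "real ^ 'n \<Rightarrow> real"
    and P :: "real \<Rightarrow> real ^ 'n"
    and C :: "real \<Rightarrow> real"
  assumes T: "standard_interference_map T"
    and na: "monotone_norm na"
    and sol: "\<And>pbar. 0 < pbar \<Longrightarrow> is_solution T na pbar (P pbar) (C pbar)"
  shows "\<exists>L\<ge>0. ((\<lambda>pbar. 1 / C pbar) \<longlongrightarrow> L) at_top \<and>
     (continuous_on nonneg T \<longrightarrow>
       (\<forall>pb :: nat \<Rightarrow> real. (\<forall>n. 0 < pb n) \<and> incseq pb \<and> filterlim pb at_top sequentially \<longrightarrow>
         (let x = (\<lambda>n. (1 / na (P (pb n))) *\<^sub>R P (pb n)) in
           (\<forall>xinf. xinf \<in> nonneg \<and> (\<exists>r. strict_mono r \<and> (x \<circ> r) \<longlonglongrightarrow> xinf)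
                \<longrightarrow> asym_eig T na xinf L) \<and>
           (\<forall>x' l'. {(y, l). asym_eig T na y l} = {(x', l')} \<and> x' \<in> posv \<and> 0 < l'
                \<longrightarrow> x \<longlonglongrightarrow> x' \<and> l' = L))))"
proof -
  interpret power_control T na P C
    using T na sol by unfold_locales
  have "let x = (\<lambda>n. (1 / na (P (pb n))) *\<^sub>R P (pb n)) in
      (\<forall>xinf. xinf \<in> nonneg \<and> (\<exists>r. strict_mono r \<and> (x \<circ> r) \<longlonglongrightarrow> xinf)
        \<longrightarrow> asym_eig T na xinf lambda_inf) \<and>
      (\<forall>x' l'. {(y, l). asym_eig T na y l} = {(x', l')} \<and> x' \<in> posv \<and> 0 < l'
        \<longrightarrow> x \<longlonglongrightarrow> x' \<and> l' = lambda_inf)"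
    if cont: "continuous_on nonneg T" and pb: "\<And>n. 0 < pb n" "filterlim pb at_top sequentially"
    for pb :: "nat \<Rightarrow> real"
  proof -
    have "asym_eig T na xinf lambda_inf"
      if "xinf \<in> nonneg" "strict_mono r" "((\<lambda>n. normalized (pb n)) \<circ> r) \<longlonglongrightarrow> xinf" for xinf r
      using accumulation_point_asym_eig[OF cont, of "pb \<circ> r" xinf] that pb
        filterlim_compose[OF pb(2) filterlim_subseq[OF that(2)]] by (simp add: o_def)
    then show ?thesis
      using normalized_tendsto_unique_asym_eig[OF cont pb(2)] pb(1)
      by (auto simp: Let_def normalized_def[symmetric])
  qed
  then show ?thesis
    using lambda_inf_nonneg tendsto_lambda_inf by blast
qed

end
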